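(* Let $n\ge2$, $k\ge1$, and let $\partial_k$ denote the distance in $H_{n,k}$. For every vertex $\mathbf x=x_1\ldots x_k$ of $H_{n,k}$: $$\partial_k(\mathbf x,\mathbf r)\le\begin{cases}k-1&\text{if }x_1=0,\\ k&\text{otherwise,}\end{cases}\qquad \partial_k(\mathbf x,P)\le\begin{cases}k&\text{if }x_1=0,\\ k-1&\text{otherwise.}\end{cases}$$
   Context: Let $n\ge 2$ and $k\ge 1$ be integers. $H_{n,k}$ is the simple undirected graph with vertex set $V_{n,k}=\mathbb{Z}_n^k$ (so $|V_{n,k}|=n^k$), whose vertices are written as strings $x_1x_2\ldots x_k$ with $x_j\in\mathbb{Z}_n=\{0,1,\ldots,n-1\}$. Two distinct vertices are adjacent if and only if they are related by one of the following rules. For $i=0$ the prefix $x_1\ldots x_i$ is empty, and "$0\ldots0$" denotes a string of zeros completing the word to length $k$. (R1) $x_1\ldots x_{k-1}x_k\sim x_1\ldots x_{k-1}y_k$ whenever $y_k\neq x_k$. (R2) For $0\le i\le k-2$: $x_1\ldots x_i0\ldots0\sim x_1\ldots x_ix_{i+1}\ldots x_k$ whenever $x_j\neq 0$ for all $i+1\le j\le k$. (R3) For $1\le i\le k-1$: $x_1\ldots x_{i-1}x_i0\ldots0\sim x_1\ldots x_{i-1}y_i0\ldots0$ whenever $x_i,y_i\neq0$ and $x_i\ne y_i$. In particular, $H_{n,1}$ is the complete graph $K_n$. The root of $H_{n,k}$ is $\mathbf r=00\ldots0$; a vertex of $H_{n,k}$ is peripheral if all its coordinates are nonzero, and $P$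 denotes the set of peripheral vertices. For a vertex $\mathbf x$ and a vertex set $U$, $\partial(\mathbf x,U)=\min_{\mathbf u\in U}\partial(\mathbf x,\mathbf u)$. *)

theory Defs
  imports Main "HOL-Library.Extended_Nat"
begin

text \<open>Vertices of H_{n,k}: words x_1...x_k over Z_n = {0,...,n-1}, represented as
  lists of length k; coordinate x_j is the list entry at index j-1.\<close>

definition hverts :: "nat \<Rightarrow> nat \<Rightarrow> nat list set" where
  "hverts n k = {xs. length xs = k \<and> set xs \<subseteq> {..<n}}"

definition hR1 :: "nat \<Rightarrow> nat list \<Rightarrow> nat list \<Rightarrow> bool" where
  "hR1 k u v \<longleftrightarrow> take (k - 1) u = take (k - 1) v"

definition hR2 :: "nat \<Rightarrow> nat list \<Rightarrow> nat list \<Rightarrow> bool" where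
  "hR2 k u v \<longleftrightarrow> (\<exists>i. i + 2 \<le> k \<and> u = take i v @ replicate (k - i) 0
      \<and> (\<forall>j. i \<le> j \<and> j < k \<longrightarrow> v ! j \<noteq> 0))"

text \<open>(R3): u = x_1..x_{i-1} x_i 0..0 and v = x_1..x_{i-1} y_i 0..0 with x_i, y_i nonzero,
  where 1 <= i <= k-1 (distinctness of x_i, y_i comes from u \<noteq> v).\<close>
definition hR3 :: "nat \<Rightarrow> nat list \<Rightarrow> nat list \<Rightarrow> bool" where
  "hR3 k u v \<longleftrightarrow> (\<exists>i. 1 \<le> i \<and> i \<le> k - 1 \<and> take (i - 1) u = take (i - 1) v
      \<and> u ! (i - 1) \<noteq> 0 \<and> v ! (i - 1) \<noteq> 0
      \<and> drop i u = replicate (k - i) 0 \<and> drop i v = replicate (k - i) 0)"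

definition hadj :: "nat \<Rightarrow> nat \<Rightarrow> nat list \<Rightarrow> nat list \<Rightarrow> bool" where
  "hadj n k u v \<longleftrightarrow> u \<in> hverts n k \<and> v \<in> hverts n k \<and> u \<noteq> v \<and>
     (hR1 k u v \<or> hR2 k u v \<or> hR2 k v u \<or> hR3 k u v)"

definition hwalk :: "nat \<Rightarrow> nat \<Rightarrow> nat list list \<Rightarrow> bool" where
  "hwalk n k p \<longleftrightarrow> p \<noteq> [] \<and> set p \<subseteq> hverts n k \<and>
     (\<forall>i. Suc i < length p \<longrightarrow> hadj n k (p ! i) (p ! Suc i))"

text \<open>Graph distance (infinite if no walk exists).\<close>
definition hdist :: "nat \<Rightarrow> nat \<Rightarrow> nat list \<Rightarrow> nat list \<Rightarrow> enat" where
  "hdist n k x y = Inf {enat (length p - 1) | p. hwalk n k p \<and> hd p = x \<and> last p = y}"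

definition hsetdist :: "nat \<Rightarrow> nat \<Rightarrow> nat list \<Rightarrow> nat list set \<Rightarrow> enat" where
  "hsetdist n k x U = Inf (hdist n k x ` U)"

definition hroot :: "nat \<Rightarrow> nat list" where
  "hroot k = replicate k 0"

definition hperiph :: "nat \<Rightarrow> nat \<Rightarrow> nat list set" where
  "hperiph n k = {x \<in> hverts n k. \<forall>j < k. x ! j \<noteq> 0}"

end

theory Submission
  imports Defs
begin

text \<open>Prefixing a letter \<open>a\<close> maps H_{n,k} edge-preservingly onto the words of H_{n,k+1}
  starting with \<open>a\<close>, and the root is adjacent to every peripheral vertex. A word \<open>a y\<close> first
  follows the walk of \<open>y\<close> inside its branch: for \<open>a = 0\<close> to the branch root, which is the root, and
  for \<open>a \<noteq> 0\<close> to a peripheral vertex of the branch, which is peripheral. One further edge between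
  root and periphery gives the other bound, and induction on k supplies the walks of \<open>y\<close>, both of
  length at most k - 1.\<close>

text \<open>Walks of length at most \<open>d\<close>: the reflexive rule accepts any budget \<open>d\<close>.\<close>

inductive hreach :: "nat \<Rightarrow> nat \<Rightarrow> nat \<Rightarrow> nat list \<Rightarrow> nat list \<Rightarrow> bool" for n k where
  hreach_refl: "x \<in> hverts n k \<Longrightarrow> hreach n k d x x"
| hreach_step: "hreach n k d x y \<Longrightarrow> hadj n k y z \<Longrightarrow> hreach n k (Suc d) x z"

lemma hreach_mono: "hreach n k d x y \<Longrightarrow> d \<le> e \<Longrightarrow> hreach n k e x y"
proof (induction arbitrary: e rule: hreach.induct)
  case (hreach_refl x d)
  then show ?case by (blast intro: hreach.hreach_refl)
next
  case (hreach_step d x y z)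
  then obtain e' where "e = Suc e'" "d \<le> e'" by (cases e) auto
  with hreach_step show ?case by (blast intro: hreach.hreach_step)
qed

lemma hwalk_snoc:
  assumes "hwalk n k p" and "hadj n k (last p) z"
  shows "hwalk n k (p @ [z])"
  unfolding hwalk_def
proof (intro conjI allI impI)
  show "set (p @ [z]) \<subseteq> hverts n k"
    using assms by (auto simp: hwalk_def hadj_def)
next
  fix i assume i: "Suc i < length (p @ [z])"
  show "hadj n k ((p @ [z]) ! i) ((p @ [z]) ! Suc i)"
  proof (cases "Suc i < length p")
    case True
    then show ?thesis using assms(1) by (simp add: hwalk_def nth_append)
  next
    case False
    with i have "i = length p - 1" by simp
    with assms show ?thesis by (simp add: hwalk_def nth_append last_conv_nth)
  qed
qed simp

lemma hreach_imp_hwalk: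
  "hreach n k d x y \<Longrightarrow> \<exists>p. hwalk n k p \<and> hd p = x \<and> last p = y \<and> length p \<le> Suc d"
proof (induction rule: hreach.induct)
  case (hreach_refl x d)
  then show ?case by (intro exI[of _ "[x]"]) (auto simp: hwalk_def)
next
  case (hreach_step d x y z)
  then obtain p where p: "hwalk n k p" "hd p = x" "last p = y" "length p \<le> Suc d" by blast
  then have "p \<noteq> []" by (simp add: hwalk_def)
  with p hreach_step.hyps(2) show ?case
    by (intro exI[of _ "p @ [z]"]) (auto intro: hwalk_snoc)
qed

lemma hdist_le_if_hreach:
  assumes "hreach n k d x y"
  shows "hdist n k x y \<le> enat d"
proof -
  obtain p where p: "hwalk n k p" "hd p = x" "last p = y" "length p \<le> Suc d"
    using hreach_imp_hwalk[OF assms] by blast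
  then have "hdist n k x y \<le> enat (length p - 1)"
    unfolding hdist_def by (intro Inf_lower) blast
  also have "\<dots> \<le> enat d" using p(4) by simp
  finally show ?thesis .
qed

lemma hsetdist_le_if_hreach:
  assumes "y \<in> U" and "hreach n k d x y"
  shows "hsetdist n k x U \<le> enat d"
proof -
  have "hsetdist n k x U \<le> hdist n k x y"
    unfolding hsetdist_def using assms(1) by (rule INF_lower)
  also have "\<dots> \<le> enat d" using assms(2) by (rule hdist_le_if_hreach)
  finally show ?thesis .
qed

lemma hadj_sym: "hadj n k u v \<Longrightarrow> hadj n k v u"
  unfolding hadj_def hR1_def hR3_def by metis

lemma hR2_Cons: "hR2 k u v \<Longrightarrow> hR2 (Suc k) (a # u) (a # v)"
proof -
  assume "hR2 k u v"
  then obtain i where i: "i + 2 \<le> k" "u = take i v @ replicate (k - i) 0"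
    "\<forall>j. i \<le> j \<and> j < k \<longrightarrow> v ! j \<noteq> 0" by (auto simp: hR2_def)
  show ?thesis unfolding hR2_def
  proof (intro exI[of _ "Suc i"] conjI allI impI)
    fix j assume "Suc i \<le> j \<and> j < Suc k"
    then show "(a # v) ! j \<noteq> 0" using i(3) by (cases j) auto
  qed (use i in simp_all)
qed

lemma hR3_Cons: "hR3 k u v \<Longrightarrow> hR3 (Suc k) (a # u) (a # v)"
proof -
  assume "hR3 k u v"
  then obtain i where i: "1 \<le> i" "i \<le> k - 1" "take (i - 1) u = take (i - 1) v"
    "u ! (i - 1) \<noteq> 0" "v ! (i - 1) \<noteq> 0"
    "drop i u = replicate (k - i) 0" "drop i v = replicate (k - i) 0"
    by (auto simp: hR3_def)
  then obtain j where j: "i = Suc j" by (cases i) auto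
  show ?thesis
    unfolding hR3_def
  proof (intro exI[of _ "Suc i"] conjI)
    show "take (Suc i - 1) (a # u) = take (Suc i - 1) (a # v)" using i(3) j by simp
    show "(a # u) ! (Suc i - 1) \<noteq> 0" "(a # v) ! (Suc i - 1) \<noteq> 0" using i(4,5) j by simp_all
    show "drop (Suc i) (a # u) = replicate (Suc k - Suc i) 0"
      "drop (Suc i) (a # v) = replicate (Suc k - Suc i) 0" using i(6,7) by simp_all
  qed (use i in simp_all)
qed

lemma hadj_Cons:
  assumes "hadj n k u v" and "a < n"
  shows "hadj n (Suc k) (a # u) (a # v)"
proof -
  have "k \<noteq> 0" using assms(1) by (auto simp: hadj_def hverts_def)
  then have "hR1 k u v \<Longrightarrow> hR1 (Suc k) (a # u) (a # v)"
    by (cases k) (auto simp: hR1_def)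
  with assms show ?thesis
    unfolding hadj_def by (auto simp: hverts_def intro: hR2_Cons hR3_Cons)
qed

lemma hreach_Cons: "hreach n k d u v \<Longrightarrow> a < n \<Longrightarrow> hreach n (Suc k) d (a # u) (a # v)"
proof (induction rule: hreach.induct)
  case (hreach_refl x d)
  then show ?case by (intro hreach.hreach_refl) (auto simp: hverts_def)
next
  case (hreach_step d x y z)
  then show ?case by (blast intro: hreach.hreach_step hadj_Cons)
qed

lemma hroot_in_hverts: "hroot k \<in> hverts n k" if "n \<ge> 1"
  using that by (auto simp: hroot_def hverts_def)

lemma hadj_hroot_hperiph:
  assumes "n \<ge> 1" and "k \<ge> 1" and "p \<in> hperiph n k"
  shows "hadj n k (hroot k) p"
proof -
  have p: "p \<in> hverts n k" "\<forall>j<k. p ! j \<noteq> 0" using assms(3) by (auto simp: hperiph_def)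
  then have "hroot k \<noteq> p" using assms(2) by (auto simp: hroot_def)
  moreover have "hR1 k (hroot k) p \<or> hR2 k (hroot k) p"
  proof (cases "k = 1")
    case False
    with assms(2) p have "hR2 k (hroot k) p"
      unfolding hR2_def hroot_def by (intro exI[of _ 0]) auto
    then show ?thesis ..
  qed (simp add: hR1_def)
  ultimately show ?thesis
    using p(1) assms(1) by (auto simp: hadj_def intro: hroot_in_hverts)
qed

lemma replicate_one_in_hperiph: "n \<ge> 2 \<Longrightarrow> replicate k 1 \<in> hperiph n k"
  by (auto simp: hperiph_def hverts_def)

lemma hreach_Cons_hroot_hperiph:
  assumes "n \<ge> 2" and "a < n"
    and "hreach n m m y (hroot m)" and "p \<in> hperiph n m" and "hreach n m m y p"
  shows "hreach n (Suc m) (if a = 0 then m else Suc m) (a # y) (hroot (Suc m))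
    \<and> (\<exists>q \<in> hperiph n (Suc m). hreach n (Suc m) (if a = 0 then Suc m else m) (a # y) q)"
proof -
  have root: "hroot (Suc m) = 0 # hroot m" by (simp add: hroot_def)
  have adj: "hadj n (Suc m) (hroot (Suc m)) q" if "q \<in> hperiph n (Suc m)" for q
    using assms(1) that by (intro hadj_hroot_hperiph) auto
  show ?thesis
  proof (cases "a = 0")
    case True
    define ones where "ones = replicate (Suc m) (1::nat)"
    have ones: "ones \<in> hperiph n (Suc m)"
      unfolding ones_def using assms(1) by (rule replicate_one_in_hperiph)
    have "hreach n (Suc m) m (a # y) (hroot (Suc m))"
      using hreach_Cons[OF assms(3,2)] True root by simp
    moreover from this have "hreach n (Suc m) (Suc m) (a # y) ones"
      using adj[OF ones] by (rule hreach_step)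
    ultimately show ?thesis
      using True ones by auto
  next
    case False
    have ap: "a # p \<in> hperiph n (Suc m)"
      using assms(2,4) False by (auto simp: hperiph_def hverts_def nth_Cons split: nat.splits)
    have "hreach n (Suc m) m (a # y) (a # p)" using hreach_Cons[OF assms(5,2)] .
    moreover from this have "hreach n (Suc m) (Suc m) (a # y) (hroot (Suc m))"
      using adj[OF ap] by (blast intro: hreach_step hadj_sym)
    ultimately show ?thesis
      using False ap by auto
  qed
qed

lemma hreach_hroot_hperiph_le_length:
  assumes "n \<ge> 2" and "x \<in> hverts n k"
  shows "hreach n k k x (hroot k) \<and> (\<exists>p \<in> hperiph n k. hreach n k k x p)"
  using assms(2)
proof (induction k arbitrary: x)
  case 0
  then show ?case by (auto simp: hverts_def hroot_def hperiph_def intro: hreach_refl)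
next
  case (Suc m)
  then obtain a y where x: "x = a # y" "a < n" "y \<in> hverts n m"
    by (auto simp: hverts_def length_Suc_conv)
  with Suc.IH obtain p where "hreach n m m y (hroot m)" "p \<in> hperiph n m" "hreach n m m y p"
    by blast
  from hreach_Cons_hroot_hperiph[OF assms(1) x(2) this] obtain q
    where "hreach n (Suc m) (if a = 0 then m else Suc m) x (hroot (Suc m))"
      and "q \<in> hperiph n (Suc m)" "hreach n (Suc m) (if a = 0 then Suc m else m) x q"
    using x(1) by blast
  moreover have "(if a = 0 then m else Suc m) \<le> Suc m" "(if a = 0 then Suc m else m) \<le> Suc m"
    by simp_all
  ultimately show ?case by (blast intro: hreach_mono)
qed

theorem mainTheorem6:
  fixes n k :: nat and x :: "nat list"
  assumes "n \<ge> 2" and "k \<ge> 1" and "x \<in> hverts n k"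
  shows "hdist n k x (hroot k) \<le> enat (if x ! 0 = 0 then k - 1 else k)
       \<and> hsetdist n k x (hperiph n k) \<le> enat (if x ! 0 = 0 then k else k - 1)"
proof -
  obtain m a y where k: "k = Suc m" and x: "x = a # y" "a < n" "y \<in> hverts n m"
    using assms(2,3) by (cases k) (auto simp: hverts_def length_Suc_conv)
  with hreach_hroot_hperiph_le_length[OF assms(1)] obtain p
    where "hreach n m m y (hroot m)" "p \<in> hperiph n m" "hreach n m m y p"
    by blast
  from hreach_Cons_hroot_hperiph[OF assms(1) x(2) this] obtain q
    where "hreach n k (if a = 0 then m else k) x (hroot k)"
      and "q \<in> hperiph n k" "hreach n k (if a = 0 then k else m) x q"
    using k x by blast
  then have "hdist n k x (hroot k) \<le> enat (if a = 0 then m else k)"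
    and "hsetdist n k x (hperiph n k) \<le> enat (if a = 0 then k else m)"
    by (auto intro: hdist_le_if_hreach hsetdist_le_if_hreach)
  with k x show ?thesis by (simp split: if_split_asm)
qed

end
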